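(* Let $S,S'\subset\mathbb{R}^n$ be finite sets and $h\colon S\to\mathbb{R}^n$, $h'\colon S'\to\mathbb{R}^n$ maps, with $\mathbb{R}$-persistence modules of the sampled maps $M^h$, $M^{h'}$. Then $$d_I(M^h,M^{h'})\le d_H(\operatorname{Gr}(h),\operatorname{Gr}(h')),$$ where $d_H$ is the Hausdorff distance induced by the metric $d_{\mathbb{R}^n\times\mathbb{R}^n}$.
   Context: Fix a field $K$; $H$ is homology (in a fixed degree) with coefficients in $K$. On $\mathbb{R}^n$ use the Euclidean metric $d_{\mathbb{R}^n}$; on $\mathbb{R}^n\times\mathbb{R}^n$ use $d_{\mathbb{R}^n\times\mathbb{R}^n}((x_1,y_1),(x_2,y_2))=\max\{d_{\mathbb{R}^n}(x_1,x_2),d_{\mathbb{R}^n}(y_1,y_2)\}$. For a subset $U$ of either space and $r\ge0$, $U_r:=\{z:\inf_{u\in U}d(z,u)\le r\}$. For $h\colon U\to\mathbb{R}^n$, $\operatorname{Gr}(h)=\{(u,h(u)):u\in U\}$. For each $r\ge0$ the projections give a diagram $U_r\leftarrow\operatorname{Gr}(h)_r\rightarrow h(U)_r$, and applying $H$ gives a representation $V_r=(HU_r\leftarrow H\operatorname{Gr}(h)_r\rightarrow Hh(U)_r)$ of the quiver $1\leftarrow2\rightarrow3$; for $s\le r$ the inclusions induce a morphism $V_s\to V_r$. (All spaces are finite dimensional when $U$ is finite.) Interval representations $\mathbb{I}[b,d]$ ($1\le b\le d\le 3$) have $K$ at vertices $b,\dots,d$, $0$ elsewhere, identity maps between copies of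 $K$ and zero otherwise. Choose for each $r$ an isomorphism $\eta_r\colon V_r\to\bigoplus_{b\le d}\mathbb{I}[b,d]^{m^r_{b,d}}$, and for $s\le r$ let $\phi(s,r):=\pi_r\circ\eta_r\circ(V_s\to V_r)\circ\eta_s^{-1}\circ\iota_s\colon\mathbb{I}[1,3]^{m^s_{1,3}}\to\mathbb{I}[1,3]^{m^r_{1,3}}$, with $\iota_s$ the inclusion of the summand $\mathbb{I}[1,3]^{m^s_{1,3}}$ and $\pi_r$ the projection onto $\mathbb{I}[1,3]^{m^r_{1,3}}$. Since such a morphism has the same linear map at all three vertices, it is identified with a linear map $K^{m^s_{1,3}}\to K^{m^r_{1,3}}$. The $\mathbb{R}$-persistence module of $h$, $M^h$, is $r\mapsto K^{m^r_{1,3}}$ ($0$ for $r<0$) with these transition maps; it is well defined up to isomorphism. An $\mathbb{R}$-persistence module $M$ is a functor from the poset $(\mathbb{R},\le)$ to finite-dimensional $K$-vector spaces, with transition maps $\varphi_M(s,t)$; $M(\delta)_t:=M_{t+\delta}$; $\varphi_M(\delta)\colon M\to M(\delta)$ has components $\varphi_M(t,t+\delta)$. $M,N$ are $\delta$-interleaved if there are morphisms $f\colon M\to N(\delta)$, $g\colon N\to M(\delta)$ with $g(\delta)\circ f=\varphi_M(2\delta)$ and $f(\delta)\circ g=\varphi_N(2\delta)$; $d_I(M,N)$ is the infimum of such $\delta\ge0$. *)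

theory Defs
  imports "HOL-Homology.Homology" "HOL-Analysis.Analysis"
begin

text \<open>Singular p-chains with coefficients in a field 'k: finitely supported
  'k-valued functions on singular simplices (HOL-Homology's simplices).\<close>

type_synonym ('a,'k) kchain = "((nat \<Rightarrow> real) \<Rightarrow> 'a) \<Rightarrow> 'k"

definition kzero :: "('a,'k::field) kchain" where
  "kzero = (\<lambda>_. 0)"

definition is_kchain :: "nat \<Rightarrow> 'a topology \<Rightarrow> ('a,'k::field) kchain \<Rightarrow> bool" where
  "is_kchain p X c \<longleftrightarrow> finite {f. c f \<noteq> 0} \<and> (\<forall>f. c f \<noteq> 0 \<longrightarrow> singular_simplex p X f)"

definition kboundary :: "nat \<Rightarrow> ('a,'k::field) kchain \<Rightarrow> ('a,'k) kchain" where
  "kboundary p c = (\<lambda>g. if p = 0 then 0 else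
      (\<Sum>f\<in>{f. c f \<noteq> 0}. \<Sum>k\<le>p. if singular_face p k f = g then (- 1) ^ k * c f else 0))"

definition is_kcycle :: "nat \<Rightarrow> 'a topology \<Rightarrow> ('a,'k::field) kchain \<Rightarrow> bool" where
  "is_kcycle p X c \<longleftrightarrow> is_kchain p X c \<and> kboundary p c = kzero"

definition is_kbdry :: "nat \<Rightarrow> 'a topology \<Rightarrow> ('a,'k::field) kchain \<Rightarrow> bool" where
  "is_kbdry p X c \<longleftrightarrow> (\<exists>d. is_kchain (Suc p) X d \<and> kboundary (Suc p) d = c)"

definition khomologous :: "nat \<Rightarrow> 'a topology \<Rightarrow> ('a,'k::field) kchain \<Rightarrow> ('a,'k) kchain \<Rightarrow> bool" where
  "khomologous p X c c' \<longleftrightarrow> is_kbdry p X (\<lambda>f. c f - c' f)"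

definition kpush :: "nat \<Rightarrow> ('a \<Rightarrow> 'b) \<Rightarrow> ('a,'k::field) kchain \<Rightarrow> ('b,'k) kchain" where
  "kpush p g c = (\<lambda>f'. \<Sum>f\<in>{f. c f \<noteq> 0 \<and> simplex_map p g f = f'}. c f)"

definition klincomb :: "'i set \<Rightarrow> ('i \<Rightarrow> 'k::field) \<Rightarrow> ('i \<Rightarrow> ('a,'k) kchain) \<Rightarrow> ('a,'k) kchain" where
  "klincomb I a v = (\<lambda>f. \<Sum>i\<in>I. a i * v i f)"

definition hbasis :: "nat \<Rightarrow> 'a topology \<Rightarrow> 'i set \<Rightarrow> ('i \<Rightarrow> ('a,'k::field) kchain) \<Rightarrow> bool" where
  "hbasis p X I v \<longleftrightarrow> finite I \<and> (\<forall>i\<in>I. is_kcycle p X (v i))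
     \<and> (\<forall>c. is_kcycle p X c \<longrightarrow> (\<exists>a. khomologous p X c (klincomb I a v)))
     \<and> (\<forall>a. khomologous p X (klincomb I a v) kzero \<longrightarrow> (\<forall>i\<in>I. a i = 0))"

definition hcoord :: "nat \<Rightarrow> 'a topology \<Rightarrow> 'i set \<Rightarrow> ('i \<Rightarrow> ('a,'k::field) kchain) \<Rightarrow> ('a,'k) kchain \<Rightarrow> 'i \<Rightarrow> 'k" where
  "hcoord p X I v c = (THE a. (\<forall>i. i \<notin> I \<longrightarrow> a i = 0) \<and> khomologous p X c (klincomb I a v))"

definition thickE :: "('a::metric_space) set \<Rightarrow> real \<Rightarrow> 'a set" where
  "thickE U r = {z. \<exists>u\<in>U. dist z u \<le> r}"

definition dmax :: "('a::metric_space \<times> 'a) \<Rightarrow> ('a \<times> 'a) \<Rightarrow> real" where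
  "dmax z w = max (dist (fst z) (fst w)) (dist (snd z) (snd w))"

definition thickM :: "('a::metric_space \<times> 'a) set \<Rightarrow> real \<Rightarrow> ('a \<times> 'a) set" where
  "thickM U r = {z. \<exists>u\<in>U. dmax z u \<le> r}"

definition Gr :: "'a set \<Rightarrow> ('a \<Rightarrow> 'b) \<Rightarrow> ('a \<times> 'b) set" where
  "Gr U h = {(u, h u) | u. u \<in> U}"

definition hausdorff_dmax :: "('a::metric_space \<times> 'a) set \<Rightarrow> ('a \<times> 'a) set \<Rightarrow> ereal" where
  "hausdorff_dmax A B = (if A = {} \<and> B = {} then 0 else
     max (SUP a\<in>A. INF b\<in>B. ereal (dmax a b)) (SUP b\<in>B. INF a\<in>A. ereal (dmax a b)))"

definition intervals3 :: "(nat \<times> nat) set" where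
  "intervals3 = {(b, d). 1 \<le> b \<and> b \<le> d \<and> d \<le> 3}"

text \<open>Indices of the summands I[b,d] (copy j) that are nonzero at vertex v.\<close>
definition vidx :: "nat \<Rightarrow> (nat \<times> nat \<Rightarrow> nat) \<Rightarrow> ((nat \<times> nat) \<times> nat) set" where
  "vidx v m = {((b, d), j). (b, d) \<in> intervals3 \<and> b \<le> v \<and> v \<le> d \<and> j < m (b, d)}"

text \<open>An isomorphism eta from H_p(X1) <-f- H_p(X2) -g-> H_p(X3) onto the direct sum of
  interval modules I[b,d]^(m(b,d)), given by the images under eta^-1 of the standard
  generators: e1, e2, e3 (cycle representatives) at vertices 1, 2, 3.\<close>
definition is_interval_decomp ::
  "nat \<Rightarrow> 'a topology \<Rightarrow> 'b topology \<Rightarrow> 'c topology \<Rightarrow> ('b \<Rightarrow> 'a) \<Rightarrow> ('b \<Rightarrow> 'c)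
   \<Rightarrow> (nat \<times> nat \<Rightarrow> nat) \<Rightarrow> ((nat \<times> nat) \<times> nat \<Rightarrow> ('a,'k::field) kchain)
   \<Rightarrow> ((nat \<times> nat) \<times> nat \<Rightarrow> ('b,'k) kchain) \<Rightarrow> ((nat \<times> nat) \<times> nat \<Rightarrow> ('c,'k) kchain) \<Rightarrow> bool" where
  "is_interval_decomp p X1 X2 X3 f g m e1 e2 e3 \<longleftrightarrow>
     hbasis p X1 (vidx 1 m) e1 \<and> hbasis p X2 (vidx 2 m) e2 \<and> hbasis p X3 (vidx 3 m) e3 \<and>
     (\<forall>b d j. ((b, d), j) \<in> vidx 2 m \<longrightarrow>
        khomologous p X1 (kpush p f (e2 ((b, d), j))) (if b = 1 then e1 ((b, d), j) else kzero) \<and>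
        khomologous p X3 (kpush p g (e2 ((b, d), j))) (if d = 3 then e3 ((b, d), j) else kzero))"

definition dom_sp :: "('a::metric_space) set \<Rightarrow> real \<Rightarrow> 'a topology" where
  "dom_sp S r = top_of_set (thickE S r)"

definition gr_sp :: "('a::metric_space) set \<Rightarrow> ('a \<Rightarrow> 'a) \<Rightarrow> real \<Rightarrow> ('a \<times> 'a) topology" where
  "gr_sp S h r = top_of_set (thickM (Gr S h) r)"

definition im_sp :: "('a::metric_space) set \<Rightarrow> ('a \<Rightarrow> 'a) \<Rightarrow> real \<Rightarrow> 'a topology" where
  "im_sp S h r = top_of_set (thickE (h ` S) r)"

definition is_decomp_family ::
  "nat \<Rightarrow> ('a::metric_space) set \<Rightarrow> ('a \<Rightarrow> 'a) \<Rightarrow> (real \<Rightarrow> nat \<times> nat \<Rightarrow> nat)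
   \<Rightarrow> (real \<Rightarrow> (nat \<times> nat) \<times> nat \<Rightarrow> ('a,'k::field) kchain)
   \<Rightarrow> (real \<Rightarrow> (nat \<times> nat) \<times> nat \<Rightarrow> ('a \<times> 'a,'k) kchain)
   \<Rightarrow> (real \<Rightarrow> (nat \<times> nat) \<times> nat \<Rightarrow> ('a,'k) kchain) \<Rightarrow> bool" where
  "is_decomp_family p S h m e1 e2 e3 \<longleftrightarrow>
     (\<forall>r\<ge>0. is_interval_decomp p (dom_sp S r) (gr_sp S h r) (im_sp S h r) fst snd
               (m r) (e1 r) (e2 r) (e3 r))"

text \<open>Persistence modules with M_r = K^(dim r); transition maps as matrices (rows i, columns j).\<close>
definition pm_dim :: "(real \<Rightarrow> nat \<times> nat \<Rightarrow> nat) \<Rightarrow> real \<Rightarrow> nat" where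
  "pm_dim m r = (if r < 0 then 0 else m r (1, 3))"

text \<open>phi(s,r) = pi_r o eta_r o (V_s -> V_r) o eta_s^-1 o iota_s, read off at vertex 2.\<close>
definition pm_tr :: "nat \<Rightarrow> ('a::metric_space) set \<Rightarrow> ('a \<Rightarrow> 'a) \<Rightarrow> (real \<Rightarrow> nat \<times> nat \<Rightarrow> nat)
   \<Rightarrow> (real \<Rightarrow> (nat \<times> nat) \<times> nat \<Rightarrow> ('a \<times> 'a,'k::field) kchain)
   \<Rightarrow> real \<Rightarrow> real \<Rightarrow> nat \<Rightarrow> nat \<Rightarrow> 'k" where
  "pm_tr p S h m e2 s r i j = (if 0 \<le> s \<and> s \<le> r then
      hcoord p (gr_sp S h r) (vidx 2 (m r)) (e2 r) (e2 s ((1, 3), j)) ((1, 3), i) else 0)"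

text \<open>F : M -> N(delta), components F t : M_t -> N_(t+delta), natural in t.\<close>
definition pm_morph :: "(real \<Rightarrow> nat) \<Rightarrow> (real \<Rightarrow> real \<Rightarrow> nat \<Rightarrow> nat \<Rightarrow> 'k::field)
   \<Rightarrow> (real \<Rightarrow> nat) \<Rightarrow> (real \<Rightarrow> real \<Rightarrow> nat \<Rightarrow> nat \<Rightarrow> 'k) \<Rightarrow> real
   \<Rightarrow> (real \<Rightarrow> nat \<Rightarrow> nat \<Rightarrow> 'k) \<Rightarrow> bool" where
  "pm_morph dM tM dN tN \<delta> F \<longleftrightarrow>
     (\<forall>s t. s \<le> t \<longrightarrow> (\<forall>i<dN (t + \<delta>). \<forall>j<dM s.
        (\<Sum>k<dM t. F t i k * tM s t k j) = (\<Sum>k<dN (s + \<delta>). tN (s + \<delta>) (t + \<delta>) i k * F s k j)))"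

definition pm_interleaved :: "(real \<Rightarrow> nat) \<Rightarrow> (real \<Rightarrow> real \<Rightarrow> nat \<Rightarrow> nat \<Rightarrow> 'k::field)
   \<Rightarrow> (real \<Rightarrow> nat) \<Rightarrow> (real \<Rightarrow> real \<Rightarrow> nat \<Rightarrow> nat \<Rightarrow> 'k) \<Rightarrow> real \<Rightarrow> bool" where
  "pm_interleaved dM tM dN tN \<delta> \<longleftrightarrow> (\<exists>F G.
     pm_morph dM tM dN tN \<delta> F \<and> pm_morph dN tN dM tM \<delta> G \<and>
     (\<forall>t. \<forall>i<dM (t + 2 * \<delta>). \<forall>j<dM t.
        (\<Sum>k<dN (t + \<delta>). G (t + \<delta>) i k * F t k j) = tM t (t + 2 * \<delta>) i j) \<and>
     (\<forall>t. \<forall>i<dN (t + 2 * \<delta>). \<forall>j<dN t.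
        (\<Sum>k<dM (t + \<delta>). F (t + \<delta>) i k * G t k j) = tN t (t + 2 * \<delta>) i j))"

definition interleaving_dist :: "(real \<Rightarrow> nat) \<Rightarrow> (real \<Rightarrow> real \<Rightarrow> nat \<Rightarrow> nat \<Rightarrow> 'k::field)
   \<Rightarrow> (real \<Rightarrow> nat) \<Rightarrow> (real \<Rightarrow> real \<Rightarrow> nat \<Rightarrow> nat \<Rightarrow> 'k) \<Rightarrow> ereal" where
  "interleaving_dist dM tM dN tN = Inf {ereal \<delta> | \<delta>. \<delta> \<ge> 0 \<and> pm_interleaved dM tM dN tN \<delta>}"

end

theory Submission
  imports Defs
begin

(* If the Hausdorff distance between the graphs is below \<delta>, the r-thickenings of the graph, the
   domain and the image of h lie in the (r + \<delta>)-thickenings of those of h', and vice versa.  The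
   inclusions therefore induce morphisms V_r -> V'_(r+\<delta>) -> V_(r+2\<delta>) of representations of
   1 <- 2 -> 3, compatible with the structure maps.  Restricting them to the I[1,3]-summands gives a
   \<delta>-interleaving, because restriction is functorial here: a summand I[b,d] of the source with
   b \<noteq> 1 or d \<noteq> 3 vanishes at vertex 1 or 3, so its image has no component in a full summand,
   which is nonzero at both ends. *)

section \<open>Chains with coefficients in a field\<close>

definition kunit :: "'s \<Rightarrow> 's \<Rightarrow> 'k::field" where
  "kunit x = (\<lambda>y. if y = x then 1 else 0)"

lemma kunit_support: "{y. kunit x y \<noteq> 0} = {x}"
  by (auto simp: kunit_def)

lemma klincomb_cong:
  "I = J \<Longrightarrow> (\<And>i. i \<in> J \<Longrightarrow> a i = b i) \<Longrightarrow> (\<And>i. i \<in> J \<Longrightarrow> v i = w i)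
    \<Longrightarrow> klincomb I a v = klincomb J b w"
  by (simp add: klincomb_def)

lemma klincomb_support:
  "{x. klincomb I a v x \<noteq> 0} \<subseteq> (\<Union>i\<in>I. {x. v i x \<noteq> 0})"
  unfolding klincomb_def by (auto elim!: sum.not_neutral_contains_not_neutral)

lemma klincomb_kunit:
  assumes "finite F" "{x. c x \<noteq> 0} \<subseteq> F"
  shows "klincomb F c kunit = c"
proof
  fix y
  have "klincomb F c kunit y = (\<Sum>x\<in>F. if y = x then c x else 0)"
    unfolding klincomb_def kunit_def by (intro sum.cong) auto
  then show "klincomb F c kunit y = c y"
    using assms by auto
qed

lemma klincomb_swap_index:
  assumes "finite I" "finite J"
  shows "klincomb I a (\<lambda>i. if i \<in> J then w i else kzero) = klincomb J (\<lambda>j. if j \<in> I then a j else 0) w"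
proof
  fix f
  have "klincomb I a (\<lambda>i. if i \<in> J then w i else kzero) f = (\<Sum>j\<in>I \<inter> J. a j * w j f)"
    using assms(1) by (auto simp: klincomb_def kzero_def sum.inter_restrict intro!: sum.cong)
  also have "\<dots> = (\<Sum>j\<in>J. if j \<in> I then a j * w j f else 0)"
    by (subst Int_commute) (rule sum.inter_restrict[OF assms(2)])
  also have "\<dots> = klincomb J (\<lambda>j. if j \<in> I then a j else 0) w f"
    unfolding klincomb_def by (intro sum.cong) auto
  finally show "klincomb I a (\<lambda>i. if i \<in> J then w i else kzero) f
      = klincomb J (\<lambda>j. if j \<in> I then a j else 0) w f" .
qed

(* For c of infinite support the sum is the junk value 0, hence the finiteness hypotheses below. *)
definition kextend :: "('s \<Rightarrow> 't \<Rightarrow> 'k::field) \<Rightarrow> ('s \<Rightarrow> 'k) \<Rightarrow> 't \<Rightarrow> 'k" where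
  "kextend K c = (\<lambda>y. \<Sum>x\<in>{x. c x \<noteq> 0}. c x * K x y)"

lemma kextend_eq_sum:
  assumes "finite F" "{x. c x \<noteq> 0} \<subseteq> F"
  shows "kextend K c y = (\<Sum>x\<in>F. c x * K x y)"
  unfolding kextend_def using assms by (intro sum.mono_neutral_left) auto

lemma kextend_add:
  assumes "finite {x. c x \<noteq> 0}" "finite {x. d x \<noteq> 0}"
  shows "kextend K (\<lambda>x. c x + d x) = (\<lambda>y. kextend K c y + kextend K d y)"
proof
  fix y
  let ?F = "{x. c x \<noteq> 0} \<union> {x. d x \<noteq> 0}"
  have "finite ?F" using assms by simp
  then show "kextend K (\<lambda>x. c x + d x) y = kextend K c y + kextend K d y"
    by (subst (1 2 3) kextend_eq_sum[of ?F]) (auto simp: distrib_right sum.distrib)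
qed

lemma kextend_smult: "kextend K (\<lambda>x. a * c x) = (\<lambda>y. a * kextend K c y)"
proof (cases "a = 0")
  case False
  then show ?thesis by (simp add: kextend_def sum_distrib_left mult.assoc)
qed (simp add: kextend_def)

lemma kextend_diff:
  assumes "finite {x. c x \<noteq> 0}" "finite {x. d x \<noteq> 0}"
  shows "kextend K (\<lambda>x. c x - d x) = (\<lambda>y. kextend K c y - kextend K d y)"
proof
  fix y
  let ?F = "{x. c x \<noteq> 0} \<union> {x. d x \<noteq> 0}"
  have "finite ?F" using assms by simp
  then show "kextend K (\<lambda>x. c x - d x) y = kextend K c y - kextend K d y"
    by (subst (1 2 3) kextend_eq_sum[of ?F]) (auto simp: left_diff_distrib sum_subtractf)
qed

lemma kextend_klincomb:
  assumes "finite I" "\<And>i. i \<in> I \<Longrightarrow> finite {x. v i x \<noteq> 0}"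
  shows "kextend K (klincomb I a v) = klincomb I a (\<lambda>i. kextend K (v i))"
proof
  fix y
  let ?F = "\<Union>i\<in>I. {x. v i x \<noteq> 0}"
  have fin: "finite ?F" using assms by simp
  have "kextend K (klincomb I a v) y = (\<Sum>x\<in>?F. \<Sum>i\<in>I. a i * (v i x * K x y))"
    unfolding kextend_eq_sum[OF fin klincomb_support]
    by (simp add: klincomb_def sum_distrib_right mult.assoc)
  also have "\<dots> = (\<Sum>i\<in>I. a i * (\<Sum>x\<in>?F. v i x * K x y))"
    by (simp add: sum.swap[of _ ?F] sum_distrib_left)
  also have "\<dots> = klincomb I a (\<lambda>i. kextend K (v i)) y"
    unfolding klincomb_def
  proof (intro sum.cong refl)
    fix i assume "i \<in> I"
    then have "kextend K (v i) y = (\<Sum>x\<in>?F. v i x * K x y)"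
      by (intro kextend_eq_sum[OF fin]) auto
    then show "a i * (\<Sum>x\<in>?F. v i x * K x y) = a i * kextend K (v i) y" by simp
  qed
  finally show "kextend K (klincomb I a v) y = klincomb I a (\<lambda>i. kextend K (v i)) y" .
qed

lemma kextend_kunit: "kextend K (kunit x) = K x"
  by (auto simp: kextend_def kunit_def)

lemma kextend_eq_klincomb:
  fixes c :: "('a, 'k::field) kchain"
  assumes "finite {x. c x \<noteq> 0}"
  shows "kextend K c = klincomb {x. c x \<noteq> 0} c K"
proof -
  have "kextend K c = kextend K (klincomb {x. c x \<noteq> 0} c kunit)"
    using assms by (simp add: klincomb_kunit)
  also have "\<dots> = klincomb {x. c x \<noteq> 0} c K"
    using assms by (subst kextend_klincomb) (simp_all add: kextend_kunit kunit_support)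
  finally show ?thesis .
qed

definition kincidence :: "nat \<Rightarrow> ((nat \<Rightarrow> real) \<Rightarrow> 'a) \<Rightarrow> ('a, 'k::field) kchain" where
  "kincidence p f = (if p = 0 then kzero
     else klincomb {..p} (\<lambda>k. (- 1) ^ k) (\<lambda>k. kunit (singular_face p k f)))"

lemma kboundary_eq_kextend: "kboundary p = kextend (kincidence p)"
proof (intro ext)
  fix c :: "('a, 'k::field) kchain" and g
  show "kboundary p c g = kextend (kincidence p) c g"
    by (auto simp: kboundary_def kextend_def kincidence_def kzero_def klincomb_def kunit_def
        sum_distrib_left intro!: sum.cong)
qed

lemma kpush_eq_kextend:
  assumes "finite {f. c f \<noteq> 0}"
  shows "kpush p g c = kextend (\<lambda>f. kunit (simplex_map p g f)) c"
proof
  fix f'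
  have "kpush p g c f' = (\<Sum>f\<in>{f. c f \<noteq> 0}. if simplex_map p g f = f' then c f else 0)"
    unfolding kpush_def using assms by (simp add: sum.inter_filter[symmetric] conj_commute)
  then show "kpush p g c f' = kextend (\<lambda>f. kunit (simplex_map p g f)) c f'"
    unfolding kextend_def kunit_def by (auto intro: sum.cong)
qed

lemma kpush_kunit: "kpush p g (kunit f) = kunit (simplex_map p g f)"
  by (simp add: kpush_eq_kextend kunit_support kextend_kunit)

lemma kpush_klincomb:
  assumes "finite I" "\<And>i. i \<in> I \<Longrightarrow> finite {f. v i f \<noteq> 0}"
  shows "kpush p g (klincomb I a v) = klincomb I a (\<lambda>i. kpush p g (v i))"
proof -
  have "finite {f. klincomb I a v f \<noteq> 0}"
    using assms by (intro finite_subset[OF klincomb_support]) auto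
  then show ?thesis
    using assms by (simp add: kpush_eq_kextend kextend_klincomb cong: klincomb_cong)
qed

lemma kpush_kincidence:
  "kpush p g (kincidence (Suc p) f) = kincidence (Suc p) (simplex_map (Suc p) g f)"
proof -
  have face_map: "simplex_map p g (singular_face (Suc p) k f)
      = singular_face (Suc p) k (simplex_map (Suc p) g f)" if "k \<le> Suc p" for k
    using that by (simp add: singular_face_simplex_map) (auto simp: simplex_map_def singular_face_def)
  show ?thesis
    unfolding kincidence_def
    by (simp add: kpush_klincomb kunit_support kpush_kunit, intro klincomb_cong) (simp_all add: face_map)
qed

lemma kpush_kboundary:
  assumes "finite {f. d f \<noteq> 0}"
  shows "kboundary (Suc p) (kpush (Suc p) g d) = kpush p g (kboundary (Suc p) d)"
proof -
  \<comment> \<open>Both sides are linear in d, and on an elementary chain this is \<open>kpush_kincidence\<close>.\<close>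
  have fin_inc: "finite {h. kincidence (Suc p) f h \<noteq> 0}" for f :: "(nat \<Rightarrow> real) \<Rightarrow> 'a"
    by (auto simp: kincidence_def kunit_support intro: finite_subset[OF klincomb_support])
  have "kboundary (Suc p) (kpush (Suc p) g d)
        = klincomb {f. d f \<noteq> 0} d (\<lambda>f. kincidence (Suc p) (simplex_map (Suc p) g f))"
    using assms by (simp add: kboundary_eq_kextend kpush_eq_kextend kextend_eq_klincomb
        kextend_klincomb kunit_support kextend_kunit cong: klincomb_cong)
  also have "\<dots> = kpush p g (klincomb {f. d f \<noteq> 0} d (kincidence (Suc p)))"
    by (simp add: kpush_klincomb[OF assms fin_inc] kpush_kincidence cong: klincomb_cong)
  also have "\<dots> = kpush p g (kboundary (Suc p) d)"
    using assms by (simp add: kboundary_eq_kextend kextend_eq_klincomb)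
  finally show ?thesis .
qed

lemma is_kchain_zero: "is_kchain p X kzero"
  by (simp add: is_kchain_def kzero_def)

lemma is_kchain_add:
  assumes "is_kchain p X c" "is_kchain p X d"
  shows "is_kchain p X (\<lambda>f. c f + d f)"
proof -
  have "finite ({f. c f \<noteq> 0} \<union> {f. d f \<noteq> 0})"
    using assms by (simp add: is_kchain_def)
  then have "finite {f. c f + d f \<noteq> 0}"
    by (rule finite_subset[rotated]) auto
  moreover have "singular_simplex p X f" if "c f + d f \<noteq> 0" for f
  proof -
    have "c f \<noteq> 0 \<or> d f \<noteq> 0" using that by auto
    then show ?thesis using assms unfolding is_kchain_def by blast
  qed
  ultimately show ?thesis by (simp add: is_kchain_def)
qed

lemma is_kchain_smult: "is_kchain p X c \<Longrightarrow> is_kchain p X (\<lambda>f. a * c f)"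
  unfolding is_kchain_def by (auto elim: rev_finite_subset)

lemma is_kchain_klincomb:
  assumes "finite I" "\<And>i. i \<in> I \<Longrightarrow> is_kchain p X (v i)"
  shows "is_kchain p X (klincomb I a v)"
  using assms
proof (induction I rule: finite_induct)
  case empty
  then show ?case using is_kchain_zero by (simp add: klincomb_def kzero_def)
next
  case (insert i I)
  then have "klincomb (insert i I) a v = (\<lambda>f. a i * v i f + klincomb I a v f)"
    by (auto simp: klincomb_def)
  then show ?case using insert by (auto intro!: is_kchain_add is_kchain_smult)
qed

lemma is_kchain_mono:
  "is_kchain p (top_of_set A) c \<Longrightarrow> A \<subseteq> B \<Longrightarrow> is_kchain p (top_of_set B) c"
  using singular_simplex_mono unfolding is_kchain_def by blast

lemma is_kchain_kpush:
  assumes "is_kchain p X c" "continuous_map X Y g"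
  shows "is_kchain p Y (kpush p g c)"
  unfolding is_kchain_def
proof (intro conjI allI impI)
  have fin: "finite {f. c f \<noteq> 0}" using assms(1) by (simp add: is_kchain_def)
  have supp: "{f'. kpush p g c f' \<noteq> 0} \<subseteq> simplex_map p g ` {f. c f \<noteq> 0}"
    using klincomb_support[of "{f. c f \<noteq> 0}" c "\<lambda>f. kunit (simplex_map p g f)"]
    by (auto simp: kpush_eq_kextend[OF fin] kextend_eq_klincomb[OF fin] kunit_support)
  then show "finite {f'. kpush p g c f' \<noteq> 0}"
    using fin by (rule finite_subset[OF _ finite_imageI])
  fix f' assume "kpush p g c f' \<noteq> 0"
  then obtain f where "c f \<noteq> 0" "f' = simplex_map p g f" using supp by blast
  then show "singular_simplex p Y f'"
    using assms singular_simplex_simplex_map unfolding is_kchain_def by blast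
qed

lemma kboundary_add:
  assumes "is_kchain p X c" "is_kchain p X d"
  shows "kboundary p (\<lambda>f. c f + d f) = (\<lambda>g. kboundary p c g + kboundary p d g)"
  using assms by (simp add: is_kchain_def kboundary_eq_kextend kextend_add)

lemma kboundary_smult: "kboundary p (\<lambda>f. a * c f) = (\<lambda>g. a * kboundary p c g)"
  by (simp add: kboundary_eq_kextend kextend_smult)

lemma kpush_diff:
  assumes "is_kchain p X c" "is_kchain p X d"
  shows "kpush p g (\<lambda>f. c f - d f) = (\<lambda>f'. kpush p g c f' - kpush p g d f')"
proof -
  have fin: "finite {f. c f \<noteq> 0}" "finite {f. d f \<noteq> 0}"
    using assms by (simp_all add: is_kchain_def)
  then have "finite {f. c f - d f \<noteq> 0}"
    by (auto intro: finite_subset[of _ "{f. c f \<noteq> 0} \<union> {f. d f \<noteq> 0}"])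
  then show ?thesis
    using fin by (simp only: kpush_eq_kextend kextend_diff)
qed

lemma is_kbdry_zero: "is_kbdry p X kzero"
proof -
  have "kboundary (Suc p) kzero = kzero" by (simp add: kboundary_def kzero_def)
  then show ?thesis unfolding is_kbdry_def using is_kchain_zero by blast
qed

lemma is_kbdry_add:
  assumes "is_kbdry p X c" "is_kbdry p X d"
  shows "is_kbdry p X (\<lambda>f. c f + d f)"
proof -
  obtain c' d' where "is_kchain (Suc p) X c'" "kboundary (Suc p) c' = c"
    "is_kchain (Suc p) X d'" "kboundary (Suc p) d' = d"
    using assms by (auto simp: is_kbdry_def)
  then show ?thesis
    unfolding is_kbdry_def by (intro exI[of _ "\<lambda>f. c' f + d' f"]) (simp add: is_kchain_add kboundary_add)
qed

lemma is_kbdry_smult: "is_kbdry p X c \<Longrightarrow> is_kbdry p X (\<lambda>f. a * c f)"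
  unfolding is_kbdry_def using is_kchain_smult kboundary_smult by metis

lemma is_kbdry_mono:
  "is_kbdry p (top_of_set A) c \<Longrightarrow> A \<subseteq> B \<Longrightarrow> is_kbdry p (top_of_set B) c"
  using is_kchain_mono unfolding is_kbdry_def by blast

lemma is_kcycle_mono:
  "is_kcycle p (top_of_set A) c \<Longrightarrow> A \<subseteq> B \<Longrightarrow> is_kcycle p (top_of_set B) c"
  using is_kchain_mono unfolding is_kcycle_def by blast

lemma khomologous_refl: "khomologous p X c c"
  using is_kbdry_zero by (simp add: khomologous_def kzero_def)

lemma khomologous_sym: "khomologous p X c d \<Longrightarrow> khomologous p X d c"
  unfolding khomologous_def using is_kbdry_smult[where a = "- 1"] by fastforce

lemma khomologous_trans [trans]:
  assumes "khomologous p X c d" "khomologous p X d e"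
  shows "khomologous p X c e"
proof -
  have "is_kbdry p X (\<lambda>f. (c f - d f) + (d f - e f))"
    using assms unfolding khomologous_def by (rule is_kbdry_add)
  then show ?thesis by (simp add: khomologous_def)
qed

lemma khomologous_mono:
  "khomologous p (top_of_set A) c d \<Longrightarrow> A \<subseteq> B \<Longrightarrow> khomologous p (top_of_set B) c d"
  unfolding khomologous_def using is_kbdry_mono by blast

lemma khomologous_klincomb:
  assumes "finite I" "\<And>i. i \<in> I \<Longrightarrow> khomologous p X (v i) (w i)"
  shows "khomologous p X (klincomb I a v) (klincomb I a w)"
  using assms
proof (induction I rule: finite_induct)
  case empty
  then show ?case by (simp add: klincomb_def khomologous_refl)
next
  case (insert i I)
  then have "is_kbdry p X (\<lambda>f. a i * (v i f - w i f) + (klincomb I a v f - klincomb I a w f))"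
    unfolding khomologous_def by (intro is_kbdry_add is_kbdry_smult) auto
  moreover have "klincomb (insert i I) a v f - klincomb (insert i I) a w f
      = a i * (v i f - w i f) + (klincomb I a v f - klincomb I a w f)" for f
    using insert by (simp add: klincomb_def right_diff_distrib)
  ultimately show ?case by (simp add: khomologous_def)
qed

lemma khomologous_kpush:
  assumes "is_kchain p X c" "is_kchain p X c'" "khomologous p X c c'" "continuous_map X Y g"
  shows "khomologous p Y (kpush p g c) (kpush p g c')"
proof -
  obtain d where d: "is_kchain (Suc p) X d" "kboundary (Suc p) d = (\<lambda>f. c f - c' f)"
    using assms(3) by (auto simp: khomologous_def is_kbdry_def)
  then have "kboundary (Suc p) (kpush (Suc p) g d) = (\<lambda>f'. kpush p g c f' - kpush p g c' f')"
    using assms(1,2) d(1) by (simp add: kpush_kboundary is_kchain_def kpush_diff[OF assms(1,2)])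
  then show ?thesis
    unfolding khomologous_def is_kbdry_def using is_kchain_kpush[OF d(1) assms(4)] by blast
qed

section \<open>Coordinates with respect to a homology basis\<close>

lemma hbasis_coeffs_unique:
  assumes "hbasis p X I v" "khomologous p X c (klincomb I a v)" "khomologous p X c (klincomb I b v)"
    and "i \<in> I"
  shows "a i = b i"
proof -
  have "khomologous p X (klincomb I a v) (klincomb I b v)"
    using assms khomologous_sym khomologous_trans by blast
  then have "khomologous p X (klincomb I (\<lambda>i. a i - b i) v) kzero"
    by (simp add: khomologous_def klincomb_def kzero_def sum_subtractf left_diff_distrib)
  then show ?thesis using assms(1,4) unfolding hbasis_def by auto
qed

lemma hcoord_unique:
  assumes "hbasis p X I v" "\<forall>i. i \<notin> I \<longrightarrow> a i = 0" "khomologous p X c (klincomb I a v)"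
  shows "hcoord p X I v c = a"
  unfolding hcoord_def
proof (rule the_equality)
  fix b assume "(\<forall>i. i \<notin> I \<longrightarrow> b i = 0) \<and> khomologous p X c (klincomb I b v)"
  then show "b = a"
    using assms hbasis_coeffs_unique[OF assms(1)] by (metis ext)
qed (use assms in blast)

lemma hcoord_spec:
  assumes "hbasis p X I v" "is_kcycle p X c"
  shows "\<forall>i. i \<notin> I \<longrightarrow> hcoord p X I v c i = 0"
    and "khomologous p X c (klincomb I (hcoord p X I v c) v)"
proof -
  obtain a where "khomologous p X c (klincomb I a v)"
    using assms unfolding hbasis_def by blast
  moreover have "klincomb I (\<lambda>i. if i \<in> I then a i else 0) v = klincomb I a v"
    by (simp add: klincomb_def)
  ultimately have "hcoord p X I v c = (\<lambda>i. if i \<in> I then a i else 0)"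
    by (intro hcoord_unique[OF assms(1)]) auto
  then show "\<forall>i. i \<notin> I \<longrightarrow> hcoord p X I v c i = 0"
    and "khomologous p X c (klincomb I (hcoord p X I v c) v)"
    using \<open>khomologous p X c (klincomb I a v)\<close> by (auto simp: klincomb_def)
qed

lemma hcoord_change_basis:
  assumes hbB: "hbasis p (top_of_set B) IB vB" and hbC: "hbasis p (top_of_set C) IC vC"
    and "B \<subseteq> C" and x: "is_kcycle p (top_of_set B) x"
  shows "hcoord p (top_of_set C) IC vC x
     = (\<lambda>i. \<Sum>k\<in>IB. hcoord p (top_of_set B) IB vB x k * hcoord p (top_of_set C) IC vC (vB k) i)"
proof (rule hcoord_unique[OF hbC])
  let ?xB = "hcoord p (top_of_set B) IB vB x"
  let ?vC = "\<lambda>k. hcoord p (top_of_set C) IC vC (vB k)"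
  have finB: "finite IB" using hbB by (simp add: hbasis_def)
  have vB_C: "is_kcycle p (top_of_set C) (vB k)" if "k \<in> IB" for k
    using hbB that \<open>B \<subseteq> C\<close> by (auto simp: hbasis_def intro: is_kcycle_mono)
  show "\<forall>i. i \<notin> IC \<longrightarrow> (\<Sum>k\<in>IB. ?xB k * ?vC k i) = 0"
    using hcoord_spec(1)[OF hbC vB_C] by simp
  have "khomologous p (top_of_set C) x (klincomb IB ?xB vB)"
    using hcoord_spec(2)[OF hbB x] \<open>B \<subseteq> C\<close> by (rule khomologous_mono)
  also have "khomologous p (top_of_set C) \<dots> (klincomb IB ?xB (\<lambda>k. klincomb IC (?vC k) vC))"
    using finB hcoord_spec(2)[OF hbC vB_C] by (rule khomologous_klincomb)
  also have "klincomb IB ?xB (\<lambda>k. klincomb IC (?vC k) vC)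
      = klincomb IC (\<lambda>i. \<Sum>k\<in>IB. ?xB k * ?vC k i) vC"
    by (simp add: klincomb_def sum_distrib_left sum_distrib_right mult.assoc sum.swap[of _ IB])
  finally show "khomologous p (top_of_set C) x (klincomb IC (\<lambda>i. \<Sum>k\<in>IB. ?xB k * ?vC k i) vC)" .
qed

lemma hcoord_eq_0_if_kpush_null:
  assumes hbX: "hbasis p X I v" and hbY: "hbasis p Y J w" and g: "continuous_map X Y g"
    and push: "\<And>i. i \<in> I \<Longrightarrow> khomologous p Y (kpush p g (v i)) (if i \<in> J then w i else kzero)"
    and y: "is_kcycle p X y" and null: "khomologous p Y (kpush p g y) kzero"
    and i: "i \<in> I \<inter> J"
  shows "hcoord p X I v y i = 0"
proof -
  let ?a = "hcoord p X I v y"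
  have finI: "finite I" and v: "\<And>i. i \<in> I \<Longrightarrow> is_kchain p X (v i)"
    using hbX by (auto simp: hbasis_def is_kcycle_def)
  have finJ: "finite J" using hbY by (simp add: hbasis_def)
  have "khomologous p Y (kpush p g y) (kpush p g (klincomb I ?a v))"
    using y finI v hcoord_spec(2)[OF hbX y] g
    by (intro khomologous_kpush) (auto simp: is_kcycle_def intro: is_kchain_klincomb)
  also have "kpush p g (klincomb I ?a v) = klincomb I ?a (\<lambda>i. kpush p g (v i))"
    using finI v by (simp add: kpush_klincomb is_kchain_def)
  also have "khomologous p Y \<dots> (klincomb I ?a (\<lambda>i. if i \<in> J then w i else kzero))"
    by (rule khomologous_klincomb[OF finI push])
  also have "\<dots> = klincomb J (\<lambda>j. if j \<in> I then ?a j else 0) w"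
    using finI finJ by (rule klincomb_swap_index)
  finally have "khomologous p Y (klincomb J (\<lambda>j. if j \<in> I then ?a j else 0) w) kzero"
    using null by (blast intro: khomologous_sym khomologous_trans)
  then have "\<forall>j\<in>J. (if j \<in> I then ?a j else 0) = 0"
    using hbY unfolding hbasis_def by blast
  then show ?thesis using i by auto
qed

section \<open>Full blocks of interval decompositions\<close>

definition interval_decomp_on :: "nat \<Rightarrow> ('a::topological_space) set \<Rightarrow> ('a \<times> 'a) set \<Rightarrow> 'a set
   \<Rightarrow> (nat \<times> nat \<Rightarrow> nat) \<Rightarrow> ((nat \<times> nat) \<times> nat \<Rightarrow> ('a,'k::field) kchain)
   \<Rightarrow> ((nat \<times> nat) \<times> nat \<Rightarrow> ('a \<times> 'a,'k) kchain) \<Rightarrow> ((nat \<times> nat) \<times> nat \<Rightarrow> ('a,'k) kchain)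
   \<Rightarrow> bool" where
  "interval_decomp_on p D G R m e1 e2 e3 \<longleftrightarrow> fst ` G \<subseteq> D \<and> snd ` G \<subseteq> R \<and>
     is_interval_decomp p (top_of_set D) (top_of_set G) (top_of_set R) fst snd m e1 e2 e3"

lemma interval_decomp_on_hbasis:
  assumes "interval_decomp_on p D G R m e1 e2 e3"
  shows "hbasis p (top_of_set D) (vidx 1 m) e1" "hbasis p (top_of_set G) (vidx 2 m) e2"
    "hbasis p (top_of_set R) (vidx 3 m) e3"
  using assms by (simp_all add: interval_decomp_on_def is_interval_decomp_def)

lemma interval_decomp_on_continuous_map:
  assumes "interval_decomp_on p D G R m e1 e2 e3"
  shows "continuous_map (top_of_set G) (top_of_set D) fst"
    and "continuous_map (top_of_set G) (top_of_set R) snd"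
  using assms
  by (auto simp: interval_decomp_on_def continuous_map_in_subtopology continuous_on_fst
      continuous_on_snd)

lemma interval_decomp_on_kpush_fst:
  assumes "interval_decomp_on p D G R m e1 e2 e3" "i \<in> vidx 2 m"
  shows "khomologous p (top_of_set D) (kpush p fst (e2 i)) (if i \<in> vidx 1 m then e1 i else kzero)"
proof -
  obtain b d j where i: "i = ((b, d), j)" by (metis prod.collapse)
  have "i \<in> vidx 1 m \<longleftrightarrow> b = 1"
    using assms(2) by (auto simp: i vidx_def intervals3_def)
  then show ?thesis
    using assms unfolding interval_decomp_on_def is_interval_decomp_def i by auto
qed

lemma interval_decomp_on_kpush_snd:
  assumes "interval_decomp_on p D G R m e1 e2 e3" "i \<in> vidx 2 m"
  shows "khomologous p (top_of_set R) (kpush p snd (e2 i)) (if i \<in> vidx 3 m then e3 i else kzero)"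
proof -
  obtain b d j where i: "i = ((b, d), j)" by (metis prod.collapse)
  have "i \<in> vidx 3 m \<longleftrightarrow> d = 3"
    using assms(2) by (auto simp: i vidx_def intervals3_def)
  then show ?thesis
    using assms unfolding interval_decomp_on_def is_interval_decomp_def i by auto
qed

(* A summand I[b,d] with b \<noteq> 1 (resp. d \<noteq> 3) dies under fst (resp. snd), while every full
   summand of the larger decomposition is detected there. *)
lemma hcoord_full_eq_0_if_not_full:
  assumes B: "interval_decomp_on p DB GB RB mB e1B e2B e3B"
    and C: "interval_decomp_on p DC GC RC mC e1C e2C e3C"
    and sub: "GB \<subseteq> GC" "DB \<subseteq> DC" "RB \<subseteq> RC"
    and k: "k \<in> vidx 2 mB" "fst k \<noteq> (1, 3)" and i: "i < mC (1, 3)"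
  shows "hcoord p (top_of_set GC) (vidx 2 mC) e2C (e2B k) ((1, 3), i) = 0"
proof -
  have y: "is_kcycle p (top_of_set GC) (e2B k)"
    using interval_decomp_on_hbasis(2)[OF B] k(1) sub(1) by (auto simp: hbasis_def intro: is_kcycle_mono)
  have "k \<notin> vidx 1 mB \<or> k \<notin> vidx 3 mB"
    using k by (auto simp: vidx_def intervals3_def)
  then show ?thesis
  proof
    assume "k \<notin> vidx 1 mB"
    then have "khomologous p (top_of_set DC) (kpush p fst (e2B k)) kzero"
      using interval_decomp_on_kpush_fst[OF B k(1)] sub(2) by (auto intro: khomologous_mono)
    then show ?thesis
      using i by (intro hcoord_eq_0_if_kpush_null[OF interval_decomp_on_hbasis(2,1)[OF C]
          interval_decomp_on_continuous_map(1)[OF C] interval_decomp_on_kpush_fst[OF C] y])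
        (auto simp: vidx_def intervals3_def)
  next
    assume "k \<notin> vidx 3 mB"
    then have "khomologous p (top_of_set RC) (kpush p snd (e2B k)) kzero"
      using interval_decomp_on_kpush_snd[OF B k(1)] sub(3) by (auto intro: khomologous_mono)
    then show ?thesis
      using i by (intro hcoord_eq_0_if_kpush_null[OF interval_decomp_on_hbasis(2,3)[OF C]
          interval_decomp_on_continuous_map(2)[OF C] interval_decomp_on_kpush_snd[OF C] y])
        (auto simp: vidx_def intervals3_def)
  qed
qed

(* Entry (i, j) of the I[1,3]-block, in the bases e2' and e2, of the map induced by an inclusion
   of the space carrying e2' into G. *)
definition full_block :: "nat \<Rightarrow> ('b::topological_space) set \<Rightarrow> (nat \<times> nat \<Rightarrow> nat)
   \<Rightarrow> ((nat \<times> nat) \<times> nat \<Rightarrow> ('b,'k::field) kchain) \<Rightarrow> ((nat \<times> nat) \<times> nat \<Rightarrow> ('b,'k) kchain)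
   \<Rightarrow> nat \<Rightarrow> nat \<Rightarrow> 'k" where
  "full_block p G m e2 e2' i j = hcoord p (top_of_set G) (vidx 2 m) e2 (e2' ((1, 3), j)) ((1, 3), i)"

lemma full_block_comp:
  assumes A: "interval_decomp_on p DA GA RA mA e1A e2A e3A"
    and B: "interval_decomp_on p DB GB RB mB e1B e2B e3B"
    and C: "interval_decomp_on p DC GC RC mC e1C e2C e3C"
    and sub: "GA \<subseteq> GB" "GB \<subseteq> GC" "DB \<subseteq> DC" "RB \<subseteq> RC"
    and j: "j < mA (1, 3)" and i: "i < mC (1, 3)"
  shows "(\<Sum>k<mB (1, 3). full_block p GC mC e2C e2B i k * full_block p GB mB e2B e2A k j)
    = full_block p GC mC e2C e2A i j"
proof -
  let ?x = "e2A ((1, 3), j)"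
  let ?c = "\<lambda>k. hcoord p (top_of_set GB) (vidx 2 mB) e2B ?x k
                * hcoord p (top_of_set GC) (vidx 2 mC) e2C (e2B k) ((1, 3), i)"
  let ?full = "(\<lambda>k. ((1, 3), k)) ` {..<mB (1, 3)}"
  have hbB: "hbasis p (top_of_set GB) (vidx 2 mB) e2B"
    using B by (rule interval_decomp_on_hbasis)
  have "((1, 3), j) \<in> vidx 2 mA" using j by (simp add: vidx_def intervals3_def)
  then have "is_kcycle p (top_of_set GA) ?x"
    using interval_decomp_on_hbasis(2)[OF A] by (simp add: hbasis_def)
  then have "is_kcycle p (top_of_set GB) ?x" using sub(1) by (rule is_kcycle_mono)
  then have "full_block p GC mC e2C e2A i j = sum ?c (vidx 2 mB)"
    unfolding full_block_def
    by (simp add: hcoord_change_basis[OF hbB interval_decomp_on_hbasis(2)[OF C] sub(2)])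
  also have "\<dots> = sum ?c ?full"
  proof (rule sum.mono_neutral_right)
    show "finite (vidx 2 mB)" using hbB by (simp add: hbasis_def)
    show "?full \<subseteq> vidx 2 mB" by (auto simp: vidx_def intervals3_def)
    show "\<forall>k\<in>vidx 2 mB - ?full. ?c k = 0"
    proof
      fix k assume k: "k \<in> vidx 2 mB - ?full"
      have "fst k \<noteq> (1, 3)"
      proof
        assume "fst k = (1, 3)"
        then have "k \<in> ?full" using k by (cases k) (auto simp: vidx_def)
        then show False using k by blast
      qed
      then show "?c k = 0" using hcoord_full_eq_0_if_not_full[OF B C sub(2-4) _ _ i] k by simp
    qed
  qed
  also have "\<dots> = (\<Sum>k<mB (1, 3). full_block p GC mC e2C e2B i k * full_block p GB mB e2B e2A k j)"
    by (simp add: sum.reindex inj_on_def full_block_def mult.commute)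
  finally show ?thesis by simp
qed

section \<open>Thickenings and the Hausdorff distance\<close>

lemma thickE_mono: "r \<le> t \<Longrightarrow> thickE U r \<subseteq> thickE U t"
  unfolding thickE_def by (auto intro: order_trans)

lemma thickM_mono: "r \<le> t \<Longrightarrow> thickM U r \<subseteq> thickM U t"
  unfolding thickM_def by (auto intro: order_trans)

lemma dmax_commute: "dmax a b = dmax b a"
  by (simp add: dmax_def dist_commute)

lemma dmax_nonneg: "0 \<le> dmax a b"
  by (simp add: dmax_def le_max_iff_disj)

lemma dmax_triangle: "dmax a c \<le> dmax a b + dmax b c"
  using dist_triangle[of "fst a" "fst c" "fst b"] dist_triangle[of "snd a" "snd c" "snd b"]
  unfolding dmax_def by linarith

lemma thickE_subset_thickE_add:
  assumes "\<forall>a\<in>A. \<exists>b\<in>B. dist a b \<le> \<delta>"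
  shows "thickE A r \<subseteq> thickE B (r + \<delta>)"
proof
  fix z assume "z \<in> thickE A r"
  then obtain a b where "a \<in> A" "dist z a \<le> r" "b \<in> B" "dist a b \<le> \<delta>"
    using assms by (auto simp: thickE_def)
  then show "z \<in> thickE B (r + \<delta>)"
    using dist_triangle[of z b a] unfolding thickE_def by (intro CollectI bexI[of _ b]) auto
qed

lemma thickM_subset_thickM_add:
  assumes "\<forall>a\<in>A. \<exists>b\<in>B. dmax a b \<le> \<delta>"
  shows "thickM A r \<subseteq> thickM B (r + \<delta>)"
proof
  fix z assume "z \<in> thickM A r"
  then obtain a b where "a \<in> A" "dmax z a \<le> r" "b \<in> B" "dmax a b \<le> \<delta>"
    using assms by (auto simp: thickM_def)
  then show "z \<in> thickM B (r + \<delta>)"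
    using dmax_triangle[of z b a] unfolding thickM_def by (intro CollectI bexI[of _ b]) auto
qed

lemma Gr_cover_imp_cover:
  assumes "\<forall>a\<in>Gr S h. \<exists>b\<in>Gr S' h'. dmax a b \<le> \<delta>"
  shows "\<forall>u\<in>S. \<exists>u'\<in>S'. dist u u' \<le> \<delta>" and "\<forall>v\<in>h ` S. \<exists>v'\<in>h' ` S'. dist v v' \<le> \<delta>"
  using assms by (fastforce simp: Gr_def dmax_def)+

lemma fst_thickM_Gr: "fst ` thickM (Gr S h) r \<subseteq> thickE S r"
  by (fastforce simp: thickM_def thickE_def Gr_def dmax_def)

lemma snd_thickM_Gr: "snd ` thickM (Gr S h) r \<subseteq> thickE (h ` S) r"
  by (fastforce simp: thickM_def thickE_def Gr_def dmax_def)

lemma hausdorff_dmax_nonneg: "0 \<le> hausdorff_dmax A B"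
proof (cases "A = {}")
  case True
  then show ?thesis by (cases "B = {}") (auto simp: hausdorff_dmax_def le_max_iff_disj)
next
  case False
  then obtain a where "a \<in> A" by blast
  then have "0 \<le> (SUP a\<in>A. INF b\<in>B. ereal (dmax a b))"
    by (intro SUP_upper2[OF \<open>a \<in> A\<close>] INF_greatest) (simp add: dmax_nonneg)
  then show ?thesis using False by (simp add: hausdorff_dmax_def le_max_iff_disj)
qed

lemma hausdorff_dmax_less_imp_cover:
  assumes "hausdorff_dmax A B < ereal r"
  shows "\<forall>a\<in>A. \<exists>b\<in>B. dmax a b \<le> r" and "\<forall>b\<in>B. \<exists>a\<in>A. dmax b a \<le> r"
proof -
  have "(SUP a\<in>A. INF b\<in>B. ereal (dmax a b)) < ereal r \<and> (SUP b\<in>B. INF a\<in>A. ereal (dmax a b)) < ereal r"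
  proof (cases "A = {} \<and> B = {}")
    case False
    then have "hausdorff_dmax A B
        = max (SUP a\<in>A. INF b\<in>B. ereal (dmax a b)) (SUP b\<in>B. INF a\<in>A. ereal (dmax a b))"
      unfolding hausdorff_dmax_def by (simp only: if_False)
    then show ?thesis using assms by simp
  qed (simp add: bot_ereal_def)
  then show "\<forall>a\<in>A. \<exists>b\<in>B. dmax a b \<le> r" and "\<forall>b\<in>B. \<exists>a\<in>A. dmax b a \<le> r"
    by (fastforce dest: SUP_lessD simp: INF_less_iff dmax_commute intro: less_imp_le)+
qed

section \<open>Interleaving the persistence modules\<close>

lemma decomp_family_interval_decomp_on:
  assumes "is_decomp_family p S h m e1 e2 e3" "0 \<le> r"
  shows "interval_decomp_on p (thickE S r) (thickM (Gr S h) r) (thickE (h ` S) r)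
           (m r) (e1 r) (e2 r) (e3 r)"
  using assms fst_thickM_Gr snd_thickM_Gr
  unfolding is_decomp_family_def interval_decomp_on_def dom_sp_def gr_sp_def im_sp_def by blast

lemma pm_tr_eq_full_block:
  "0 \<le> s \<Longrightarrow> s \<le> r \<Longrightarrow>
    pm_tr p S h m e2 s r i j = full_block p (thickM (Gr S h) r) (m r) (e2 r) (e2 s) i j"
  by (simp add: pm_tr_def full_block_def gr_sp_def)

definition interleaving_map :: "nat \<Rightarrow> ('a::metric_space) set \<Rightarrow> ('a \<Rightarrow> 'a) \<Rightarrow> (real \<Rightarrow> nat \<times> nat \<Rightarrow> nat)
   \<Rightarrow> (real \<Rightarrow> (nat \<times> nat) \<times> nat \<Rightarrow> ('a \<times> 'a,'k::field) kchain)
   \<Rightarrow> (real \<Rightarrow> (nat \<times> nat) \<times> nat \<Rightarrow> ('a \<times> 'a,'k) kchain) \<Rightarrow> real \<Rightarrow> real \<Rightarrow> nat \<Rightarrow> nat \<Rightarrow> 'k"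
  where
  "interleaving_map p S' h' m' e2' e2 \<delta> t =
     (if 0 \<le> t then full_block p (thickM (Gr S' h') (t + \<delta>)) (m' (t + \<delta>)) (e2' (t + \<delta>)) (e2 t)
      else (\<lambda>_ _. 0))"

lemma pm_morph_interleaving_map:
  assumes fam: "is_decomp_family p S h m e1 e2 e3" and fam': "is_decomp_family p S' h' m' e1' e2' e3'"
    and "0 \<le> \<delta>" and cover: "\<forall>a\<in>Gr S h. \<exists>b\<in>Gr S' h'. dmax a b \<le> \<delta>"
  shows "pm_morph (pm_dim m) (pm_tr p S h m e2) (pm_dim m') (pm_tr p S' h' m' e2') \<delta>
           (interleaving_map p S' h' m' e2' e2 \<delta>)"
  unfolding pm_morph_def
proof (intro allI impI)
  fix s t i j assume "s \<le> t" and i: "i < pm_dim m' (t + \<delta>)" and j: "j < pm_dim m s"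
  have "0 \<le> s" using j by (auto simp: pm_dim_def split: if_splits)
  then have dims: "j < m s (1, 3)" "i < m' (t + \<delta>) (1, 3)"
    using i j \<open>s \<le> t\<close> \<open>0 \<le> \<delta>\<close> by (simp_all add: pm_dim_def)
  note dec = decomp_family_interval_decomp_on[OF fam] and dec' = decomp_family_interval_decomp_on[OF fam']
  note G = thickM_subset_thickM_add[OF cover]
    and D = thickE_subset_thickE_add[OF Gr_cover_imp_cover(1)[OF cover]]
    and R = thickE_subset_thickE_add[OF Gr_cover_imp_cover(2)[OF cover]]
  have "0 \<le> t" "0 \<le> s + \<delta>" "0 \<le> t + \<delta>" using \<open>0 \<le> s\<close> \<open>s \<le> t\<close> \<open>0 \<le> \<delta>\<close> by simp_all
  have "(\<Sum>k<pm_dim m t. interleaving_map p S' h' m' e2' e2 \<delta> t i k * pm_tr p S h m e2 s t k j)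
      = (\<Sum>k<m t (1, 3). full_block p (thickM (Gr S' h') (t + \<delta>)) (m' (t + \<delta>)) (e2' (t + \<delta>)) (e2 t) i k
          * full_block p (thickM (Gr S h) t) (m t) (e2 t) (e2 s) k j)"
    using \<open>0 \<le> s\<close> \<open>s \<le> t\<close> by (simp add: pm_dim_def interleaving_map_def pm_tr_eq_full_block)
  also have "\<dots> = full_block p (thickM (Gr S' h') (t + \<delta>)) (m' (t + \<delta>)) (e2' (t + \<delta>)) (e2 s) i j"
    by (rule full_block_comp[OF dec[OF \<open>0 \<le> s\<close>] dec[OF \<open>0 \<le> t\<close>] dec'[OF \<open>0 \<le> t + \<delta>\<close>]
          thickM_mono[OF \<open>s \<le> t\<close>] G D R dims])
  also have "\<dots> = (\<Sum>k<m' (s + \<delta>) (1, 3).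
      full_block p (thickM (Gr S' h') (t + \<delta>)) (m' (t + \<delta>)) (e2' (t + \<delta>)) (e2' (s + \<delta>)) i k
      * full_block p (thickM (Gr S' h') (s + \<delta>)) (m' (s + \<delta>)) (e2' (s + \<delta>)) (e2 s) k j)"
    using \<open>s \<le> t\<close>
    by (intro full_block_comp[OF dec[OF \<open>0 \<le> s\<close>] dec'[OF \<open>0 \<le> s + \<delta>\<close>]
          dec'[OF \<open>0 \<le> t + \<delta>\<close>] G _ _ _ dims, symmetric] thickM_mono thickE_mono) simp_all
  also have "\<dots> = (\<Sum>k<pm_dim m' (s + \<delta>).
      pm_tr p S' h' m' e2' (s + \<delta>) (t + \<delta>) i k * interleaving_map p S' h' m' e2' e2 \<delta> s k j)"
    using \<open>0 \<le> s\<close> \<open>s \<le> t\<close> \<open>0 \<le> s + \<delta>\<close>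
    by (simp add: pm_dim_def interleaving_map_def pm_tr_eq_full_block)
  finally show "(\<Sum>k<pm_dim m t. interleaving_map p S' h' m' e2' e2 \<delta> t i k * pm_tr p S h m e2 s t k j)
      = (\<Sum>k<pm_dim m' (s + \<delta>).
      pm_tr p S' h' m' e2' (s + \<delta>) (t + \<delta>) i k * interleaving_map p S' h' m' e2' e2 \<delta> s k j)" .
qed

lemma interleaving_map_comp:
  assumes fam: "is_decomp_family p S h m e1 e2 e3" and fam': "is_decomp_family p S' h' m' e1' e2' e3'"
    and "0 \<le> \<delta>" and cover: "\<forall>a\<in>Gr S h. \<exists>b\<in>Gr S' h'. dmax a b \<le> \<delta>"
    and cover': "\<forall>a\<in>Gr S' h'. \<exists>b\<in>Gr S h. dmax a b \<le> \<delta>"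
    and i: "i < pm_dim m (t + 2 * \<delta>)" and j: "j < pm_dim m t"
  shows "(\<Sum>k<pm_dim m' (t + \<delta>). interleaving_map p S h m e2 e2' \<delta> (t + \<delta>) i k
            * interleaving_map p S' h' m' e2' e2 \<delta> t k j) = pm_tr p S h m e2 t (t + 2 * \<delta>) i j"
proof -
  have "0 \<le> t" using j by (auto simp: pm_dim_def split: if_splits)
  then have "0 \<le> t + \<delta>" "0 \<le> t + \<delta> + \<delta>" using \<open>0 \<le> \<delta>\<close> by simp_all
  have two: "t + \<delta> + \<delta> = t + 2 * \<delta>" by simp
  have dims: "j < m t (1, 3)" "i < m (t + \<delta> + \<delta>) (1, 3)"
    using i j \<open>0 \<le> t\<close> \<open>0 \<le> \<delta>\<close> by (simp_all add: pm_dim_def two)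
  have "(\<Sum>k<pm_dim m' (t + \<delta>). interleaving_map p S h m e2 e2' \<delta> (t + \<delta>) i k
            * interleaving_map p S' h' m' e2' e2 \<delta> t k j)
      = (\<Sum>k<m' (t + \<delta>) (1, 3).
          full_block p (thickM (Gr S h) (t + \<delta> + \<delta>)) (m (t + \<delta> + \<delta>)) (e2 (t + \<delta> + \<delta>)) (e2' (t + \<delta>)) i k
          * full_block p (thickM (Gr S' h') (t + \<delta>)) (m' (t + \<delta>)) (e2' (t + \<delta>)) (e2 t) k j)"
    using \<open>0 \<le> t\<close> \<open>0 \<le> t + \<delta>\<close> by (simp add: pm_dim_def interleaving_map_def)
  also have "\<dots> = full_block p (thickM (Gr S h) (t + \<delta> + \<delta>)) (m (t + \<delta> + \<delta>)) (e2 (t + \<delta> + \<delta>)) (e2 t) i j"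
    by (rule full_block_comp[OF decomp_family_interval_decomp_on[OF fam \<open>0 \<le> t\<close>]
          decomp_family_interval_decomp_on[OF fam' \<open>0 \<le> t + \<delta>\<close>]
          decomp_family_interval_decomp_on[OF fam \<open>0 \<le> t + \<delta> + \<delta>\<close>]
          thickM_subset_thickM_add[OF cover] thickM_subset_thickM_add[OF cover']
          thickE_subset_thickE_add[OF Gr_cover_imp_cover(1)[OF cover']]
          thickE_subset_thickE_add[OF Gr_cover_imp_cover(2)[OF cover']] dims])
  also have "\<dots> = pm_tr p S h m e2 t (t + 2 * \<delta>) i j"
    using \<open>0 \<le> t\<close> \<open>0 \<le> \<delta>\<close> by (simp add: pm_tr_eq_full_block two)
  finally show ?thesis .
qed

lemma pm_interleaved_if_Gr_cover:
  assumes "is_decomp_family p S h m e1 e2 e3" "is_decomp_family p S' h' m' e1' e2' e3'"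
    and "0 \<le> \<delta>" and "\<forall>a\<in>Gr S h. \<exists>b\<in>Gr S' h'. dmax a b \<le> \<delta>"
    and "\<forall>a\<in>Gr S' h'. \<exists>b\<in>Gr S h. dmax a b \<le> \<delta>"
  shows "pm_interleaved (pm_dim m) (pm_tr p S h m e2) (pm_dim m') (pm_tr p S' h' m' e2') \<delta>"
  unfolding pm_interleaved_def
  using pm_morph_interleaving_map[OF assms(1-4)] pm_morph_interleaving_map[OF assms(2,1,3,5)]
    interleaving_map_comp[OF assms] interleaving_map_comp[OF assms(2,1,3,5,4)]
  by blast

theorem mainTheorem7:
  fixes p :: nat
    and S S' :: "(real ^ 'n) set"
    and h h' :: "real ^ 'n \<Rightarrow> real ^ 'n"
    and m m' :: "real \<Rightarrow> nat \<times> nat \<Rightarrow> nat"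
    and e1 e3 e1' e3' :: "real \<Rightarrow> (nat \<times> nat) \<times> nat \<Rightarrow> (real ^ 'n, 'k::field) kchain"
    and e2 e2' :: "real \<Rightarrow> (nat \<times> nat) \<times> nat \<Rightarrow> ((real ^ 'n) \<times> (real ^ 'n), 'k) kchain"
  assumes "finite S" and "finite S'"
    and "is_decomp_family p S h m e1 e2 e3"
    and "is_decomp_family p S' h' m' e1' e2' e3'"
  shows "interleaving_dist (pm_dim m) (pm_tr p S h m e2) (pm_dim m') (pm_tr p S' h' m' e2')
           \<le> hausdorff_dmax (Gr S h) (Gr S' h')"
  unfolding interleaving_dist_def
proof (rule dense_ge)
  fix x assume x: "hausdorff_dmax (Gr S h) (Gr S' h') < x"
  show "Inf {ereal \<delta> | \<delta>. 0 \<le> \<delta> \<and>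
          pm_interleaved (pm_dim m) (pm_tr p S h m e2) (pm_dim m') (pm_tr p S' h' m' e2') \<delta>} \<le> x"
  proof (cases x)
    case (real r)
    then have "0 \<le> r" using order.strict_trans1[OF hausdorff_dmax_nonneg x] by simp
    moreover have "pm_interleaved (pm_dim m) (pm_tr p S h m e2) (pm_dim m') (pm_tr p S' h' m' e2') r"
      using x real \<open>0 \<le> r\<close> hausdorff_dmax_less_imp_cover[of "Gr S h" "Gr S' h'" r]
      by (intro pm_interleaved_if_Gr_cover[OF assms(3,4)]) auto
    ultimately show ?thesis using real by (blast intro: Inf_lower)
  qed (use x in simp_all)
qed

end
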